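(* Let $d\in\mathbb{N}$, $0<\beta<d$, and $R,r,c>0$ with $R>3r$, and let $\mu$ and $f^*$ be as defined below. Suppose \[ c\leq\frac{1-\beta/d}{2400\left(1+\frac{R}{r}\right)^{\beta}}. \] Then there exists $m_0\in\mathbb{N}$ such that for every $\mathbf{x}\in B(\mathbf{0},r)$, every $m>m_0$ and every $p\in(0,0.49)$, with probability at least $1-\tilde{\mathcal{O}}_m\Big(\frac{1}{m}+\frac{1}{m^{(1-\beta/d)/(\beta/d)}}\Big)$ over the training set $S$, it holds that $\hat{h}_\beta(\mathbf{x})=1$.
   Context: $V_d$ denotes the volume of the unit ball in $\mathbb{R}^d$ and $B(\mathbf{z},s)$ the closed Euclidean ball. The density is $\mu(\mathbf{x})=\frac{c}{V_dr^d}$ if $\|\mathbf{x}\|<r$, $\mu(\mathbf{x})=\frac{1-c}{V_d(R^d-(3r)^d)}$ if $3r\leq\|\mathbf{x}\|\leq R$, and $0$ otherwise. The target is $f^*(\mathbf{x})=-1$ if $\|\mathbf{x}\|\leq r$ and $f^*(\mathbf{x})=1$ otherwise. Training set $S=(\mathbf{x}_i,y_i)_{i=1}^m$: $\mathbf{x}_i$ i.i.d. with density $\mu$, and independently $y_i=f^*(\mathbf{x}_i)$ with probability $1-p$, $y_i=-f^*(\mathbf{x}_i)$ with probability $p$. $\hat{h}_\beta(\mathbf{x})=\mathrm{sign}\big(\sum_{i=1}^m y_i\|\mathbf{x}-\mathbf{x}_i\|^{-\beta}\big)$ for $\mathbf{x}$ not a sample point and $\hat{h}_\beta(\mathbf{x}_i)=y_i$.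 $\tilde{\mathcal{O}}_m$ hides constants independent of $m$ and logarithmic factors in $m$. *)

theory Defs
  imports "HOL-Analysis.Analysis" "HOL-Probability.Probability"
begin

definition Vd :: "'a::euclidean_space itself \<Rightarrow> real" where
  "Vd _ = measure lborel (ball (0::'a) 1)"

definition mu_dens :: "real \<Rightarrow> real \<Rightarrow> real \<Rightarrow> 'a::euclidean_space \<Rightarrow> real" where
  "mu_dens r R c x =
     (let d = DIM('a); V = Vd TYPE('a) in
      if norm x < r then c / (V * r ^ d)
      else if 3 * r \<le> norm x \<and> norm x \<le> R then (1 - c) / (V * (R ^ d - (3 * r) ^ d))
      else 0)"

definition fstar :: "real \<Rightarrow> 'a::real_normed_vector \<Rightarrow> real" where
  "fstar r x = (if norm x \<le> r then -1 else 1)"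

text \<open>Distribution of one training example: the point x_i with density mu, and
  independently a flip bit which is True with probability p (label flipped).\<close>
definition example_measure :: "real \<Rightarrow> real \<Rightarrow> real \<Rightarrow> real \<Rightarrow> ('a::euclidean_space \<times> bool) measure" where
  "example_measure r R c p =
     density lborel (\<lambda>x. ennreal (mu_dens r R c x)) \<Otimes>\<^sub>M measure_pmf (bernoulli_pmf p)"

definition sample_measure :: "nat \<Rightarrow> real \<Rightarrow> real \<Rightarrow> real \<Rightarrow> real \<Rightarrow> (nat \<Rightarrow> 'a::euclidean_space \<times> bool) measure" where
  "sample_measure m r R c p = PiM {..<m} (\<lambda>_. example_measure r R c p)"

definition label :: "real \<Rightarrow> (nat \<Rightarrow> 'a::euclidean_space \<times> bool) \<Rightarrow> nat \<Rightarrow> real" where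
  "label r S i = (if snd (S i) then - fstar r (fst (S i)) else fstar r (fst (S i)))"

text \<open>The interpolating predictor h_beta.  At a sample point it returns that point's
  label (the first index if the point is repeated, a null event); elsewhere the sign
  of the weighted sum.\<close>
definition hhat :: "real \<Rightarrow> nat \<Rightarrow> real \<Rightarrow> (nat \<Rightarrow> 'a::euclidean_space \<times> bool) \<Rightarrow> 'a \<Rightarrow> real" where
  "hhat \<beta> m r S x =
     (if \<exists>i<m. fst (S i) = x then label r S (LEAST i. i < m \<and> fst (S i) = x)
      else sgn (\<Sum>i<m. label r S i * norm (x - fst (S i)) powr (- \<beta>)))"

end

theory Submission
  imports Defs
begin

(* Fix x in the closed ball B(0, r) and put delta = r * m powr (-1/beta).  Call a sample point bad
   if it lies outside the support of mu, or in B(0, r) within distance delta of x.  For every good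
   point x_i the summand y_i * |x - x_i| powr (-beta) of the sum defining hhat x is at least
   Z_i = +-|x - x_i| powr (-beta) on the annulus (with the flipped sign if the label is flipped)
   minus max(|x - x_i|, delta) powr (-beta) on the inner ball.  So hhat x = 1 unless some point is
   bad, which by the union bound has probability at most m * c * (delta / r)^d = c / m^((d-beta)/beta),
   or the i.i.d. sum of the Z_i is <= 0.  The annulus part of E Z is at least
   (1 - 2p)(1 - c)(R + r) powr (-beta), while a dyadic decomposition of the Riesz potential bounds
   the inner part by 3 c d / (d - beta) * r powr (-beta); the hypothesis on c makes this small, so
   E Z >= (R + r) powr (-beta) / 100.  Truncating at delta bounds E Z^2 by
   O(log m * (1 + m powr ((2 beta - d) / beta))), and Chebyshev's inequality finishes. *)

lemma Vd_eq_unit_ball_vol: "Vd TYPE('a::euclidean_space) = unit_ball_vol DIM('a)"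
  unfolding Vd_def measure_def using emeasure_ball[of 1 "0::'a"] by simp

lemma Vd_pos: "Vd TYPE('a::euclidean_space) > 0"
  by (simp add: Vd_eq_unit_ball_vol)

lemma emeasure_ball_Vd:
  "0 \<le> \<rho> \<Longrightarrow> emeasure lborel (ball (z::'a::euclidean_space) \<rho>) = Vd TYPE('a) * \<rho> ^ DIM('a)"
  using emeasure_ball[of \<rho> z] by (simp add: Vd_eq_unit_ball_vol)

lemma emeasure_cball_Vd:
  "0 \<le> \<rho> \<Longrightarrow> emeasure lborel (cball (z::'a::euclidean_space) \<rho>) = Vd TYPE('a) * \<rho> ^ DIM('a)"
  using emeasure_cball[of \<rho> z] by (simp add: Vd_eq_unit_ball_vol)

lemma ball_cball_sets_borel[measurable]:
  "ball (z::'a::metric_space) \<rho> \<in> sets borel" "cball (z::'a::metric_space) \<rho> \<in> sets borel"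
  by auto

lemma exists_power_of_two_bracket:
  fixes v :: real
  assumes "1 < v"
  shows "\<exists>k. 2 ^ k < v \<and> v \<le> 2 ^ Suc k"
proof -
  obtain n where "v < 2 ^ n"
    using real_arch_pow[of 2 v] by auto
  then have "\<exists>n. \<not> v \<le> 2 ^ n \<and> v \<le> 2 ^ Suc n"
    using assms by (intro exists_least_lemma) (auto intro: less_imp_le)
  then show ?thesis
    by (auto simp: not_le)
qed

lemma dyadic_shell:
  fixes u \<rho> \<alpha> :: real
  assumes "0 < \<alpha>" "0 < u" "u < \<rho>"
  obtains k where "u < \<rho> * (2 powr (-1/\<alpha>)) ^ k" "u powr (-\<alpha>) \<le> \<rho> powr (-\<alpha>) * 2 ^ Suc k"
proof -
  define v where "v = (\<rho> / u) powr \<alpha>"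
  have "1 < v"
    unfolding v_def using assms by simp
  then obtain k where lower: "2 ^ k < v" and upper: "v \<le> 2 ^ Suc k"
    using exists_power_of_two_bracket by blast
  have "2 powr (real k / \<alpha>) < \<rho> / u"
  proof -
    have "(2 ^ k) powr (1/\<alpha>) < v powr (1/\<alpha>)"
      using lower assms by (intro powr_less_mono2) auto
    then show ?thesis
      unfolding v_def using assms by (simp add: powr_realpow[symmetric] powr_powr)
  qed
  then have "u < \<rho> / 2 powr (real k / \<alpha>)"
    using assms by (simp add: pos_less_divide_eq mult.commute)
  moreover have "(2 powr (-1/\<alpha>)) ^ k = 1 / 2 powr (real k / \<alpha>)"
    by (subst powr_power) (simp_all add: powr_minus_divide[symmetric])
  ultimately have "u < \<rho> * (2 powr (-1/\<alpha>)) ^ k"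
    by simp
  moreover have "u powr (-\<alpha>) = \<rho> powr (-\<alpha>) * v"
    unfolding v_def using assms by (simp add: powr_divide powr_minus field_simps)
  ultimately show ?thesis
    using that upper assms by (simp add: mult_left_mono)
qed

lemma geometric_factor_le:
  fixes \<alpha> d :: real
  assumes "0 < \<alpha>" "\<alpha> < d"
  shows "1 + 2 / (1 - 2 powr (1 - d / \<alpha>)) \<le> 3 * d / (d - \<alpha>)"
proof -
  define s where "s = ln 2 * (d / \<alpha> - 1)"
  have "2/3 \<le> ln (2::real)"
    by (rule ln2_ge_two_thirds)
  moreover have "1 < d / \<alpha>"
    using assms by simp
  ultimately have s_pos: "0 < s"
    unfolding s_def by simp
  have "2 powr (1 - d / \<alpha>) = exp (- s)"
    unfolding s_def powr_def by (simp add: algebra_simps)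
  moreover have "1 / (1 - exp (-s)) \<le> 1 + 1 / s"
  proof -
    have "s \<le> exp s - 1"
      using exp_ge_add_one_self[of s] by linarith
    then have "1 / (exp s - 1) \<le> 1 / s"
      using s_pos by (intro divide_left_mono) auto
    moreover have "1 / (1 - exp (-s)) = 1 + 1 / (exp s - 1)"
      using s_pos by (simp add: exp_minus field_simps)
    ultimately show ?thesis
      by simp
  qed
  moreover have "1 / s \<le> \<alpha> / (2/3 * (d - \<alpha>))"
  proof -
    have "1 / s = \<alpha> / (ln 2 * (d - \<alpha>))"
      unfolding s_def using assms by (simp add: field_simps)
    also have "\<dots> \<le> \<alpha> / (2/3 * (d - \<alpha>))"
      using assms \<open>2/3 \<le> ln 2\<close> by (intro divide_left_mono mult_right_mono mult_pos_pos) auto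
    finally show ?thesis .
  qed
  ultimately have "1 + 2 / (1 - 2 powr (1 - d / \<alpha>)) \<le> 1 + 2 * (1 + \<alpha> / (2/3 * (d - \<alpha>)))"
    by simp
  also have "\<dots> = 3 * d / (d - \<alpha>)"
    using assms by (simp add: field_simps)
  finally show ?thesis .
qed

lemma min_powr_square_le:
  fixes u \<delta> \<beta> \<alpha> \<sigma> :: real
  assumes "0 \<le> u" "0 < \<delta>" "0 < \<alpha>" "0 \<le> \<sigma>" "\<alpha> + \<sigma> = 2 * \<beta>"
  shows "(min (u powr (-\<beta>)) (\<delta> powr (-\<beta>)))\<^sup>2 \<le> \<delta> powr (-\<sigma>) * u powr (-\<alpha>)"
proof (cases "u = 0")
  case False
  then have "0 < u"
    using assms by simp
  have square: "(v powr (-\<beta>))\<^sup>2 = v powr (-\<sigma>) * v powr (-\<alpha>)" if "0 < v" for v :: real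
  proof -
    have "(v powr (-\<beta>))\<^sup>2 = v powr (real 2 * (-\<beta>))"
      using that by (intro powr_power) simp
    also have "real 2 * (-\<beta>) = -\<sigma> + -\<alpha>"
      using assms by simp
    finally show ?thesis
      by (simp only: powr_add)
  qed
  show ?thesis
  proof (cases "\<delta> \<le> u")
    case True
    then have "min (u powr (-\<beta>)) (\<delta> powr (-\<beta>)) = u powr (-\<beta>)"
      using assms by (intro min_absorb1 powr_mono2') auto
    then show ?thesis
      using True assms \<open>0 < u\<close> by (simp add: square mult_right_mono powr_mono2')
  next
    case False
    have "(min (u powr (-\<beta>)) (\<delta> powr (-\<beta>)))\<^sup>2 \<le> (\<delta> powr (-\<beta>))\<^sup>2"
      by (intro power_mono) auto
    then show ?thesis
      using False assms \<open>0 < u\<close> by (simp add: square mult_left_mono powr_mono2' order_trans)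
  qed
qed simp

(* Distance at least rho from x costs rho powr (-alpha); the shell between rho * t^(k+1) and rho * t^k,
   t = 2 powr (-1/alpha), is covered by the k-th ball with weight rho powr (-alpha) * 2^(k+1).
   Weights double while ball volumes shrink by 2 powr (-d/alpha), so for alpha < d the integral
   is a convergent geometric series. *)
definition dyadic_majorant :: "real \<Rightarrow> real \<Rightarrow> 'a::metric_space \<Rightarrow> 'a \<Rightarrow> 'a \<Rightarrow> ennreal" where
  "dyadic_majorant \<alpha> \<rho> x z y = ennreal (\<rho> powr (-\<alpha>)) * indicator (ball z \<rho>) y
     + (\<Sum>k. ennreal (\<rho> powr (-\<alpha>) * 2 ^ Suc k) * indicator (ball x (\<rho> * (2 powr (-1/\<alpha>)) ^ k)) y)"

lemma ennreal_term_le_suminf: "(f :: nat \<Rightarrow> ennreal) k \<le> suminf f"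
  using sum_le_suminf[of f "{k}"] by simp

lemma norm_powr_le_dyadic_majorant:
  fixes x y z :: "'a::real_normed_vector"
  assumes "0 < \<alpha>" "0 < \<rho>"
  shows "ennreal (indicator (ball z \<rho>) y * norm (x - y) powr (-\<alpha>)) \<le> dyadic_majorant \<alpha> \<rho> x z y"
proof (cases "y \<in> ball z \<rho> \<and> x \<noteq> y")
  case False
  then show ?thesis
    by (auto simp: indicator_def)
next
  case True
  define u where "u = norm (x - y)"
  have "0 < u"
    using True unfolding u_def by simp
  show ?thesis
  proof (cases "u < \<rho>")
    case False
    then have "u powr (-\<alpha>) \<le> \<rho> powr (-\<alpha>)"
      using assms by (intro powr_mono2') auto
    then show ?thesis
      using True unfolding u_def dyadic_majorant_def by (simp add: ennreal_leI add_increasing2)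
  next
    case True
    then obtain k where "u < \<rho> * (2 powr (-1/\<alpha>)) ^ k" "u powr (-\<alpha>) \<le> \<rho> powr (-\<alpha>) * 2 ^ Suc k"
      using dyadic_shell[OF assms(1) \<open>0 < u\<close>] by blast
    then have "ennreal (indicator (ball z \<rho>) y * norm (x - y) powr (-\<alpha>))
        \<le> ennreal (\<rho> powr (-\<alpha>) * 2 ^ Suc k) * indicator (ball x (\<rho> * (2 powr (-1/\<alpha>)) ^ k)) y"
      unfolding u_def by (simp add: dist_norm indicator_def ennreal_leI)
    also have "\<dots> \<le> dyadic_majorant \<alpha> \<rho> x z y"
      unfolding dyadic_majorant_def by (rule order_trans[OF ennreal_term_le_suminf]) simp
    finally show ?thesis .
  qed
qed

lemma nn_integral_dyadic_shell:
  fixes x :: "'a::euclidean_space" and \<alpha> \<rho> :: real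
  assumes "0 < \<rho>"
  shows "(\<integral>\<^sup>+y. ennreal (\<rho> powr (-\<alpha>) * 2 ^ Suc k) * indicator (ball x (\<rho> * (2 powr (-1/\<alpha>)) ^ k)) y \<partial>lborel)
    = 2 * Vd TYPE('a) * \<rho> powr (real DIM('a) - \<alpha>) * (2 powr (1 - real DIM('a) / \<alpha>)) ^ k"
proof -
  define t where "t = (2::real) powr (-1/\<alpha>)"
  have "2 * t ^ DIM('a) = 2 powr (1 - real DIM('a) / \<alpha>)"
  proof -
    have "t ^ DIM('a) = 2 powr (- real DIM('a) / \<alpha>)"
      unfolding t_def by (subst powr_power) simp_all
    then show ?thesis
      by (simp add: powr_diff powr_minus_divide)
  qed
  then have g: "(2 powr (1 - real DIM('a) / \<alpha>)) ^ k = 2 ^ k * (t ^ DIM('a)) ^ k"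
    by (metis power_mult_distrib)
  have \<rho>d: "\<rho> powr (real DIM('a) - \<alpha>) = \<rho> powr (-\<alpha>) * \<rho> ^ DIM('a)"
    using assms by (simp add: powr_realpow[symmetric] powr_add[symmetric])
  have "(\<rho> * t ^ k) ^ DIM('a) = \<rho> ^ DIM('a) * (t ^ DIM('a)) ^ k"
    by (simp add: power_mult_distrib flip: power_mult add: mult.commute)
  then have eq: "\<rho> powr (-\<alpha>) * 2 ^ Suc k * (Vd TYPE('a) * (\<rho> * t ^ k) ^ DIM('a))
      = 2 * Vd TYPE('a) * \<rho> powr (real DIM('a) - \<alpha>) * (2 powr (1 - real DIM('a) / \<alpha>)) ^ k"
    unfolding g \<rho>d by (simp add: mult_ac)
  have "(\<integral>\<^sup>+y. ennreal (\<rho> powr (-\<alpha>) * 2 ^ Suc k) * indicator (ball x (\<rho> * t ^ k)) y \<partial>lborel)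
      = ennreal (\<rho> powr (-\<alpha>) * 2 ^ Suc k) * emeasure lborel (ball x (\<rho> * t ^ k))"
    by (rule nn_integral_cmult_indicator) simp
  also have "\<dots> = ennreal (\<rho> powr (-\<alpha>) * 2 ^ Suc k * (Vd TYPE('a) * (\<rho> * t ^ k) ^ DIM('a)))"
    using assms by (subst emeasure_ball_Vd) (simp_all add: t_def ennreal_mult')
  also have "\<dots> = 2 * Vd TYPE('a) * \<rho> powr (real DIM('a) - \<alpha>) * (2 powr (1 - real DIM('a) / \<alpha>)) ^ k"
    by (simp only: eq)
  finally show ?thesis
    unfolding t_def .
qed

lemma nn_integral_dyadic_majorant:
  fixes x z :: "'a::euclidean_space" and \<alpha> \<rho> :: real
  assumes \<alpha>: "0 < \<alpha>" "\<alpha> < real DIM('a)" and "0 < \<rho>"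
  shows "(\<integral>\<^sup>+y. dyadic_majorant \<alpha> \<rho> x z y \<partial>lborel)
    = Vd TYPE('a) * \<rho> powr (real DIM('a) - \<alpha>) * (1 + 2 / (1 - 2 powr (1 - real DIM('a) / \<alpha>)))"
proof -
  define A where "A = Vd TYPE('a) * \<rho> powr (real DIM('a) - \<alpha>)"
  define g where "g = (2::real) powr (1 - real DIM('a) / \<alpha>)"
  have "0 < A"
    unfolding A_def using Vd_pos[where 'a='a] \<open>0 < \<rho>\<close> by simp
  have "g < 1"
    unfolding g_def using \<alpha> by (intro powr_less_one) (auto simp: field_simps)
  have near: "(\<integral>\<^sup>+y. ennreal (\<rho> powr (-\<alpha>)) * indicator (ball z \<rho>) y \<partial>lborel) = A"
    unfolding A_def using \<open>0 < \<rho>\<close> Vd_pos[where 'a='a]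
    by (simp add: nn_integral_cmult_indicator emeasure_ball_Vd ennreal_mult'[symmetric] powr_diff
        powr_realpow[symmetric] powr_minus_divide)
  have "(\<lambda>k. 2 * A * g ^ k) sums (2 * A / (1 - g))"
    using geometric_sums[of g] sums_mult[of _ _ "2 * A"] \<open>g < 1\<close> unfolding g_def by (simp add: divide_inverse)
  then have shells: "(\<Sum>k. ennreal (2 * Vd TYPE('a) * \<rho> powr (real DIM('a) - \<alpha>) * g ^ k)) = 2 * A / (1 - g)"
    using \<open>0 < A\<close> Vd_pos[where 'a='a] unfolding g_def A_def by (intro suminf_ennreal_eq) (auto simp: mult.assoc)
  have "(\<integral>\<^sup>+y. dyadic_majorant \<alpha> \<rho> x z y \<partial>lborel)
      = (\<integral>\<^sup>+y. ennreal (\<rho> powr (-\<alpha>)) * indicator (ball z \<rho>) y \<partial>lborel)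
        + (\<integral>\<^sup>+y. (\<Sum>k. ennreal (\<rho> powr (-\<alpha>) * 2 ^ Suc k) * indicator (ball x (\<rho> * (2 powr (-1/\<alpha>)) ^ k)) y) \<partial>lborel)"
    unfolding dyadic_majorant_def by (rule nn_integral_add) measurable
  also have "(\<integral>\<^sup>+y. (\<Sum>k. ennreal (\<rho> powr (-\<alpha>) * 2 ^ Suc k) * indicator (ball x (\<rho> * (2 powr (-1/\<alpha>)) ^ k)) y) \<partial>lborel)
      = (\<Sum>k. \<integral>\<^sup>+y. ennreal (\<rho> powr (-\<alpha>) * 2 ^ Suc k) * indicator (ball x (\<rho> * (2 powr (-1/\<alpha>)) ^ k)) y \<partial>lborel)"
    by (rule nn_integral_suminf) measurable
  finally have "(\<integral>\<^sup>+y. dyadic_majorant \<alpha> \<rho> x z y \<partial>lborel) = ennreal A + ennreal (2 * A / (1 - g))"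
    unfolding near nn_integral_dyadic_shell[OF \<open>0 < \<rho>\<close>] g_def[symmetric] shells .
  also have "\<dots> = A * (1 + 2 / (1 - g))"
    using \<open>0 < A\<close> \<open>g < 1\<close> by (simp add: ennreal_plus[symmetric] distrib_left del: ennreal_plus)
  finally show ?thesis
    unfolding A_def g_def .
qed

lemma nn_integral_ball_norm_powr_le:
  fixes x z :: "'a::euclidean_space" and \<alpha> \<rho> :: real
  assumes \<alpha>: "0 < \<alpha>" "\<alpha> < real DIM('a)" and "0 < \<rho>"
  shows "(\<integral>\<^sup>+y. ennreal (indicator (ball z \<rho>) y * norm (x - y) powr (-\<alpha>)) \<partial>lborel)
    \<le> 3 * real DIM('a) / (real DIM('a) - \<alpha>) * Vd TYPE('a) * \<rho> powr (real DIM('a) - \<alpha>)"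
proof -
  have "(\<integral>\<^sup>+y. ennreal (indicator (ball z \<rho>) y * norm (x - y) powr (-\<alpha>)) \<partial>lborel)
      \<le> (\<integral>\<^sup>+y. dyadic_majorant \<alpha> \<rho> x z y \<partial>lborel)"
    using \<alpha>(1) \<open>0 < \<rho>\<close> by (intro nn_integral_mono norm_powr_le_dyadic_majorant)
  also have "\<dots> \<le> Vd TYPE('a) * \<rho> powr (real DIM('a) - \<alpha>) * (3 * real DIM('a) / (real DIM('a) - \<alpha>))"
    unfolding nn_integral_dyadic_majorant[OF assms] using geometric_factor_le[OF \<alpha>] Vd_pos[where 'a='a]
    by (intro ennreal_leI mult_left_mono) auto
  finally show ?thesis
    by (simp add: mult_ac)
qed

lemma (in prob_space) prob_ge_of_complement_subset:
  assumes "A \<in> events" "B \<in> events" "G \<in> events" "space M - (A \<union> B) \<subseteq> G"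
  shows "1 - prob A - prob B \<le> prob G"
proof -
  have "1 - prob A - prob B \<le> 1 - prob (A \<union> B)"
    using assms measure_Un_le[of A M B] by simp
  also have "\<dots> = prob (space M - (A \<union> B))"
    using assms by (simp add: prob_compl)
  also have "\<dots> \<le> prob G"
    using assms by (intro finite_measure_mono) auto
  finally show ?thesis .
qed

lemma integral_PiM_component:
  fixes f :: "'b \<Rightarrow> real"
  assumes "prob_space M" "i \<in> I" and [measurable]: "f \<in> borel_measurable M"
  shows "(\<integral>S. f (S i) \<partial>PiM I (\<lambda>_. M)) = integral\<^sup>L M f"
proof -
  have "(\<integral>S. f (S i) \<partial>PiM I (\<lambda>_. M)) = integral\<^sup>L (distr (PiM I (\<lambda>_. M)) M (\<lambda>S. S i)) f"
    using assms by (simp add: integral_distr)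
  also have "distr (PiM I (\<lambda>_. M)) M (\<lambda>S. S i) = M"
    using assms by (intro distr_PiM_component) auto
  finally show ?thesis .
qed

lemma measure_PiM_component:
  assumes "prob_space M" "i \<in> I" "A \<in> sets M"
  shows "measure (PiM I (\<lambda>_. M)) {S \<in> space (PiM I (\<lambda>_. M)). S i \<in> A} = measure M A"
proof -
  have "distr (PiM I (\<lambda>_. M)) M (\<lambda>S. S i) = M"
    using assms by (intro distr_PiM_component) auto
  then have "measure M A = measure (distr (PiM I (\<lambda>_. M)) M (\<lambda>S. S i)) A"
    by simp
  also have "\<dots> = measure (PiM I (\<lambda>_. M)) ((\<lambda>S. S i) -` A \<inter> space (PiM I (\<lambda>_. M)))"
    using assms by (intro measure_distr) auto
  finally show ?thesis
    by (simp add: Int_def conj_commute)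
qed

lemma measure_PiM_exists_component_le:
  assumes "prob_space M" "finite I" "A \<in> sets M"
  shows "measure (PiM I (\<lambda>_. M)) {S \<in> space (PiM I (\<lambda>_. M)). \<exists>i\<in>I. S i \<in> A} \<le> card I * measure M A"
proof -
  have "{S \<in> space (PiM I (\<lambda>_. M)). \<exists>i\<in>I. S i \<in> A} = (\<Union>i\<in>I. {S \<in> space (PiM I (\<lambda>_. M)). S i \<in> A})"
    by auto
  then have "measure (PiM I (\<lambda>_. M)) {S \<in> space (PiM I (\<lambda>_. M)). \<exists>i\<in>I. S i \<in> A}
      \<le> (\<Sum>i\<in>I. measure (PiM I (\<lambda>_. M)) {S \<in> space (PiM I (\<lambda>_. M)). S i \<in> A})"
    using assms by (simp only:) (rule measure_UNION_le, auto)
  also have "\<dots> = (\<Sum>i\<in>I. measure M A)"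
    using assms by (intro sum.cong refl measure_PiM_component) auto
  finally show ?thesis
    by simp
qed

lemma integral_PiM_two_components:
  fixes f :: "'b \<Rightarrow> real"
  assumes M: "prob_space M" and "finite I" "i \<in> I" "j \<in> I" "i \<noteq> j" and f: "integrable M f"
  shows "(\<integral>S. f (S i) * f (S j) \<partial>PiM I (\<lambda>_. M)) = (integral\<^sup>L M f)\<^sup>2"
proof -
  interpret M: prob_space M
    by (rule M)
  interpret product_sigma_finite "\<lambda>_. M"
    by (simp add: product_sigma_finite_def M.sigma_finite_measure_axioms)
  define F where "F k = (if k \<in> {i, j} then f else (\<lambda>_. 1))" for k
  have prod_F: "(\<Prod>k\<in>I. g k (F k)) = g i f * g j f" if "\<And>k. g k (\<lambda>_. 1) = 1" for g :: "_ \<Rightarrow> _ \<Rightarrow> real"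
  proof -
    have "(\<Prod>k\<in>I. g k (F k)) = (\<Prod>k\<in>{i, j}. g k f)"
      using assms that by (intro prod.mono_neutral_cong_right) (auto simp: F_def)
    then show ?thesis
      using \<open>i \<noteq> j\<close> by simp
  qed
  have "(\<integral>S. (\<Prod>k\<in>I. F k (S k)) \<partial>PiM I (\<lambda>_. M)) = (\<Prod>k\<in>I. integral\<^sup>L M (F k))"
    using assms by (intro product_integral_prod) (auto simp: F_def)
  moreover have "(\<Prod>k\<in>I. integral\<^sup>L M (F k)) = integral\<^sup>L M f * integral\<^sup>L M f"
    by (rule prod_F) (simp add: M.prob_space)
  moreover have "(\<Prod>k\<in>I. F k (S k)) = f (S i) * f (S j)" for S
    using prod_F[of "\<lambda>k h. h (S k)"] by simp
  ultimately show ?thesis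
    by (simp add: power2_eq_square)
qed

lemma integral_PiM_centered_sum_square:
  fixes f :: "'b \<Rightarrow> real"
  assumes M: "prob_space M" and "finite I"
    and f[measurable]: "f \<in> borel_measurable M" and bounded: "\<And>y. \<bar>f y\<bar> \<le> K"
  shows "integrable (PiM I (\<lambda>_. M)) (\<lambda>S. (\<Sum>i\<in>I. f (S i) - integral\<^sup>L M f)\<^sup>2)"
    and "(\<integral>S. (\<Sum>i\<in>I. f (S i) - integral\<^sup>L M f)\<^sup>2 \<partial>PiM I (\<lambda>_. M)) = card I * prob_space.variance M f"
proof -
  interpret M: prob_space M
    by (rule M)
  interpret Q: prob_space "PiM I (\<lambda>_. M)"
    by (rule prob_space_PiM) (rule M)
  define g where "g y = f y - M.expectation f" for y
  have [measurable]: "g \<in> borel_measurable M"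
    unfolding g_def by measurable
  have g_bounded: "\<bar>g y\<bar> \<le> K + \<bar>M.expectation f\<bar>" for y
    unfolding g_def using bounded[of y] by linarith
  have int_g: "integrable M g"
    using g_bounded by (intro M.integrable_const_bound[where B="K + \<bar>M.expectation f\<bar>"]) auto
  have "M.expectation g = 0"
    unfolding g_def using int_g bounded
    by (simp add: M.prob_space M.integrable_const_bound[where B=K] g_def)
  then have cross: "(\<integral>S. g (S i) * g (S j) \<partial>PiM I (\<lambda>_. M)) = (if i = j then M.variance f else 0)"
    if "i \<in> I" "j \<in> I" for i j
    using that \<open>finite I\<close> integral_PiM_two_components[OF M \<open>finite I\<close> _ _ _ int_g]
      integral_PiM_component[OF M, of i I "\<lambda>y. g y * g y"]
    by (auto simp: g_def power2_eq_square)
  have int_cross: "integrable (PiM I (\<lambda>_. M)) (\<lambda>S. g (S i) * g (S j))" if "i \<in> I" "j \<in> I" for i j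
  proof (rule Q.integrable_const_bound[where B="(K + \<bar>M.expectation f\<bar>)\<^sup>2"])
    have "\<bar>g (S i)\<bar> * \<bar>g (S j)\<bar> \<le> (K + \<bar>M.expectation f\<bar>) * (K + \<bar>M.expectation f\<bar>)" for S
      using g_bounded[of "S i"] g_bounded[of "S j"] by (intro mult_mono) auto
    then show "AE S in PiM I (\<lambda>_. M). norm (g (S i) * g (S j)) \<le> (K + \<bar>M.expectation f\<bar>)\<^sup>2"
      by (simp add: abs_mult power2_eq_square)
  qed (use that in measurable)
  have square: "(\<Sum>i\<in>I. f (S i) - M.expectation f)\<^sup>2 = (\<Sum>i\<in>I. \<Sum>j\<in>I. g (S i) * g (S j))" for S
    unfolding g_def power2_eq_square by (rule sum_product)
  show "integrable (PiM I (\<lambda>_. M)) (\<lambda>S. (\<Sum>i\<in>I. f (S i) - M.expectation f)\<^sup>2)"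
    unfolding square using int_cross by (intro Bochner_Integration.integrable_sum) auto
  have "(\<integral>S. (\<Sum>i\<in>I. f (S i) - M.expectation f)\<^sup>2 \<partial>PiM I (\<lambda>_. M))
      = (\<Sum>i\<in>I. \<Sum>j\<in>I. \<integral>S. g (S i) * g (S j) \<partial>PiM I (\<lambda>_. M))"
    unfolding square using int_cross by (simp add: Bochner_Integration.integral_sum)
  also have "\<dots> = card I * M.variance f"
    using \<open>finite I\<close> by (simp add: cross if_distrib sum.delta)
  finally show "(\<integral>S. (\<Sum>i\<in>I. f (S i) - M.expectation f)\<^sup>2 \<partial>PiM I (\<lambda>_. M)) = card I * M.variance f" .
qed

lemma measure_PiM_sum_nonpos_le:
  fixes f :: "'b \<Rightarrow> real"
  assumes M: "prob_space M" and "finite I" "I \<noteq> {}"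
    and f[measurable]: "f \<in> borel_measurable M" and bounded: "\<And>y. \<bar>f y\<bar> \<le> K"
    and "0 < integral\<^sup>L M f"
  shows "measure (PiM I (\<lambda>_. M)) {S \<in> space (PiM I (\<lambda>_. M)). (\<Sum>i\<in>I. f (S i)) \<le> 0}
    \<le> integral\<^sup>L M (\<lambda>y. (f y)\<^sup>2) / (card I * (integral\<^sup>L M f)\<^sup>2)"
proof -
  interpret M: prob_space M
    by (rule M)
  interpret Q: prob_space "PiM I (\<lambda>_. M)"
    by (rule prob_space_PiM) (rule M)
  define \<mu> where "\<mu> = M.expectation f"
  define Z where "Z S = (\<Sum>i\<in>I. f (S i) - \<mu>)" for S
  have [measurable]: "Z \<in> borel_measurable (PiM I (\<lambda>_. M))"
    unfolding Z_def by measurable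
  have int_f: "integrable M f"
    using bounded by (intro M.integrable_const_bound[where B=K]) auto
  have "(f y)\<^sup>2 \<le> K\<^sup>2" for y
    using power_mono[OF bounded abs_ge_zero, of y 2] by simp
  then have int_f2: "integrable M (\<lambda>y. (f y)\<^sup>2)"
    by (intro M.integrable_const_bound[where B="K\<^sup>2"]) auto
  have "0 < card I * \<mu>"
    using assms unfolding \<mu>_def by (simp add: card_gt_0_iff)
  have "{S \<in> space (PiM I (\<lambda>_. M)). (\<Sum>i\<in>I. f (S i)) \<le> 0} \<subseteq> {S \<in> space (PiM I (\<lambda>_. M)). (card I * \<mu>)\<^sup>2 \<le> (Z S)\<^sup>2}"
    using \<open>0 < card I * \<mu>\<close> by (auto simp: Z_def sum_subtractf abs_le_square_iff[symmetric] intro!: abs_leI)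
  then have "measure (PiM I (\<lambda>_. M)) {S \<in> space (PiM I (\<lambda>_. M)). (\<Sum>i\<in>I. f (S i)) \<le> 0}
      \<le> measure (PiM I (\<lambda>_. M)) {S \<in> space (PiM I (\<lambda>_. M)). (card I * \<mu>)\<^sup>2 \<le> (Z S)\<^sup>2}"
    by (intro Q.finite_measure_mono) measurable
  also have "\<dots> \<le> (\<integral>S. (Z S)\<^sup>2 \<partial>PiM I (\<lambda>_. M)) / (card I * \<mu>)\<^sup>2"
    using integral_PiM_centered_sum_square(1)[OF M \<open>finite I\<close> f bounded] \<open>0 < card I * \<mu>\<close> assms(2,3)
    unfolding Z_def \<mu>_def by (intro integral_Markov_inequality_measure[where A="space (PiM I (\<lambda>_. M))"])
      (auto simp: card_gt_0_iff)
  also have "\<dots> = M.variance f / (card I * \<mu>\<^sup>2)"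
    unfolding Z_def \<mu>_def integral_PiM_centered_sum_square(2)[OF M \<open>finite I\<close> f bounded]
    using \<open>0 < card I * \<mu>\<close> by (simp add: power2_eq_square)
  also have "\<dots> \<le> M.expectation (\<lambda>y. (f y)\<^sup>2) / (card I * \<mu>\<^sup>2)"
    using \<open>0 < card I * \<mu>\<close> int_f int_f2 by (intro divide_right_mono) (auto simp: M.variance_eq \<mu>_def)
  finally show ?thesis
    unfolding \<mu>_def .
qed

definition annulus :: "real \<Rightarrow> real \<Rightarrow> 'a::real_normed_vector set" where
  "annulus a b = cball 0 b - ball 0 a"

lemma mem_annulus_iff: "y \<in> annulus a b \<longleftrightarrow> a \<le> norm y \<and> norm y \<le> b"
  unfolding annulus_def by (auto simp: dist_norm)

lemma annulus_sets_borel[measurable]: "annulus a b \<in> sets borel"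
  unfolding annulus_def by measurable

lemma emeasure_annulus:
  assumes "0 \<le> a" "a \<le> b"
  shows "emeasure lborel (annulus a b :: 'a::euclidean_space set) = Vd TYPE('a) * (b ^ DIM('a) - a ^ DIM('a))"
proof -
  have "emeasure lborel (annulus a b :: 'a set) = emeasure lborel (cball (0::'a) b) - emeasure lborel (ball (0::'a) a)"
    unfolding annulus_def using assms by (intro emeasure_Diff) (auto simp: emeasure_ball_Vd)
  also have "\<dots> = ennreal (Vd TYPE('a) * b ^ DIM('a) - Vd TYPE('a) * a ^ DIM('a))"
    using assms Vd_pos[where 'a='a]
    by (simp add: emeasure_ball_Vd emeasure_cball_Vd ennreal_minus power_mono)
  finally show ?thesis
    by (simp add: algebra_simps)
qed

lemma mu_dens_borel[measurable]: "mu_dens r R c \<in> borel_measurable borel"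
  unfolding mu_dens_def Let_def by measurable

lemma measurable_label[measurable]:
  "(\<lambda>S. label r S i) \<in> borel_measurable (PiM I (\<lambda>_. borel \<Otimes>\<^sub>M count_space UNIV) :: (nat \<Rightarrow> 'a::euclidean_space \<times> bool) measure)"
proof (cases "i \<in> I")
  case True
  then show ?thesis
    unfolding label_def fstar_def by measurable
next
  case False
  then have "label r S i = label r ((\<lambda>_. undefined) :: nat \<Rightarrow> 'a \<times> bool) i" if "S \<in> space (PiM I (\<lambda>_. borel \<Otimes>\<^sub>M count_space UNIV))"
    for S :: "nat \<Rightarrow> 'a \<times> bool"
  proof -
    have "S i = undefined"
      using that False by (simp add: space_PiM PiE_def extensional_def)
    then show ?thesis
      by (simp add: label_def)
  qed
  then show ?thesis
    by (subst measurable_cong) auto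
qed

lemma measurable_hhat:
  "(\<lambda>S. hhat \<beta> m r S x) \<in> borel_measurable (PiM {..<m} (\<lambda>_. borel \<Otimes>\<^sub>M count_space UNIV) :: (nat \<Rightarrow> 'a::euclidean_space \<times> bool) measure)"
proof -
  have [measurable]: "(\<lambda>S. label r S (LEAST i. i < m \<and> fst (S i) = x))
      \<in> borel_measurable (PiM {..<m} (\<lambda>_. borel \<Otimes>\<^sub>M count_space UNIV) :: (nat \<Rightarrow> 'a \<times> bool) measure)"
    by (rule measurable_compose_countable[OF measurable_label]) measurable
  have "(\<exists>i<m. P i) \<longleftrightarrow> (\<exists>i\<in>{..<m}. P i)" for P
    by auto
  then show ?thesis
    unfolding hhat_def by measurable
qed

locale noisy_model =
  fixes r R c p :: real
  assumes r_pos: "0 < r" and R_gt: "3 * r < R" and c_nonneg: "0 \<le> c" and c_le_1: "c \<le> 1"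
    and p_nonneg: "0 \<le> p" and p_le_1: "p \<le> 1"
begin

lemma annulus_volume_pos: "(3 * r) ^ DIM('a::euclidean_space) < R ^ DIM('a)"
  using r_pos R_gt by (intro power_strict_mono) auto

lemma mu_dens_nonneg: "0 \<le> mu_dens r R c (y::'a::euclidean_space)"
  using annulus_volume_pos[where 'a='a] Vd_pos[where 'a='a] c_nonneg c_le_1 r_pos
  unfolding mu_dens_def Let_def by auto

definition points :: "'a::euclidean_space measure" where
  "points = density lborel (\<lambda>y. ennreal (mu_dens r R c y))"

lemma sets_points[measurable_cong, simp]: "sets points = sets borel"
  unfolding points_def by simp

lemma space_points[simp]: "space points = UNIV"
  unfolding points_def by simp

lemma emeasure_points: "A \<in> sets borel \<Longrightarrow> emeasure points A = (\<integral>\<^sup>+y\<in>A. mu_dens r R c y \<partial>lborel)"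
  unfolding points_def by (simp add: emeasure_density)

lemma emeasure_points_ball_annulus:
  "emeasure points (ball 0 r :: 'a::euclidean_space set) = c"
  "emeasure points (annulus (3 * r) R :: 'a set) = 1 - c"
proof -
  define V where "V = Vd TYPE('a)"
  have "0 < V"
    unfolding V_def by (rule Vd_pos)
  have "ennreal (mu_dens r R c y) * indicator (ball 0 r) y = ennreal (c / (V * r ^ DIM('a))) * indicator (ball 0 r) y"
    for y :: 'a
    unfolding V_def mu_dens_def by (simp add: indicator_def)
  then have "emeasure points (ball 0 r :: 'a set) = ennreal (c / (V * r ^ DIM('a))) * emeasure lborel (ball (0::'a) r)"
    by (simp add: emeasure_points nn_integral_cmult_indicator)
  also have "\<dots> = c"
    using r_pos c_nonneg \<open>0 < V\<close> by (simp add: emeasure_ball_Vd V_def[symmetric] flip: ennreal_mult')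
  finally show "emeasure points (ball 0 r :: 'a set) = c" .
  have "ennreal (mu_dens r R c y) * indicator (annulus (3 * r) R) y
      = ennreal ((1 - c) / (V * (R ^ DIM('a) - (3 * r) ^ DIM('a)))) * indicator (annulus (3 * r) R) y" for y :: 'a
    unfolding V_def mu_dens_def Let_def using r_pos by (auto simp: indicator_def mem_annulus_iff)
  then have "emeasure points (annulus (3 * r) R :: 'a set)
      = ennreal ((1 - c) / (V * (R ^ DIM('a) - (3 * r) ^ DIM('a)))) * emeasure lborel (annulus (3 * r) R :: 'a set)"
    by (simp add: emeasure_points nn_integral_cmult_indicator)
  also have "\<dots> = 1 - c"
    using r_pos R_gt c_le_1 \<open>0 < V\<close> annulus_volume_pos[where 'a='a]
    by (simp add: emeasure_annulus V_def[symmetric] flip: ennreal_mult')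
  finally show "emeasure points (annulus (3 * r) R :: 'a set) = 1 - c" .
qed

lemma prob_space_points: "prob_space (points :: 'a::euclidean_space measure)"
proof
  have "emeasure points (space points :: 'a set) = emeasure points (ball 0 r \<union> annulus (3 * r) R :: 'a set)"
  proof -
    have support: "ennreal (mu_dens r R c y) = ennreal (mu_dens r R c y) * indicator (ball 0 r \<union> annulus (3 * r) R) y"
      for y :: 'a
      unfolding mu_dens_def Let_def by (auto simp: indicator_def mem_annulus_iff)
    have "(\<integral>\<^sup>+y. mu_dens r R c (y::'a) \<partial>lborel) = emeasure points (ball 0 r \<union> annulus (3 * r) R :: 'a set)"
      unfolding emeasure_points[OF sets.Un[OF ball_cball_sets_borel(1) annulus_sets_borel]]
      by (rule nn_integral_cong) (rule support)
    then show ?thesis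
      by (simp add: emeasure_points)
  qed
  also have "\<dots> = emeasure points (ball 0 r :: 'a set) + emeasure points (annulus (3 * r) R :: 'a set)"
    using r_pos by (intro plus_emeasure[symmetric]) (auto simp: mem_annulus_iff)
  finally show "emeasure points (space points :: 'a set) = 1"
    using c_nonneg c_le_1 by (simp add: emeasure_points_ball_annulus ennreal_plus[symmetric] del: ennreal_plus)
qed

lemma example_measure_eq:
  "example_measure r R c p = (points :: 'a::euclidean_space measure) \<Otimes>\<^sub>M measure_pmf (bernoulli_pmf p)"
  unfolding example_measure_def points_def ..

lemma sets_example_measure[measurable_cong]:
  "sets (example_measure r R c p :: ('a::euclidean_space \<times> bool) measure) = sets (borel \<Otimes>\<^sub>M count_space UNIV)"
  unfolding example_measure_eq by (intro sets_pair_measure_cong) auto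

lemma prob_space_example_measure: "prob_space (example_measure r R c p :: ('a::euclidean_space \<times> bool) measure)"
proof -
  interpret points: prob_space "points :: 'a measure"
    by (rule prob_space_points)
  interpret pair_prob_space "points :: 'a measure" "measure_pmf (bernoulli_pmf p)" ..
  show ?thesis
    unfolding example_measure_eq by unfold_locales
qed

lemma integral_example_measure:
  fixes g :: "'a::euclidean_space \<times> bool \<Rightarrow> real"
  assumes g[measurable]: "g \<in> borel_measurable (borel \<Otimes>\<^sub>M count_space UNIV)" and bounded: "\<And>\<omega>. \<bar>g \<omega>\<bar> \<le> K"
  shows "integral\<^sup>L (example_measure r R c p) g = (\<integral>y. p * g (y, True) + (1 - p) * g (y, False) \<partial>points)"
proof -
  interpret points: prob_space "points :: 'a measure"
    by (rule prob_space_points)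
  interpret pair_prob_space "points :: 'a measure" "measure_pmf (bernoulli_pmf p)" ..
  have "integrable (points \<Otimes>\<^sub>M measure_pmf (bernoulli_pmf p)) g"
    using bounded by (intro integrable_const_bound[where B=K]) auto
  then have "integral\<^sup>L (points \<Otimes>\<^sub>M measure_pmf (bernoulli_pmf p)) g
      = (\<integral>y. \<integral>b. g (y, b) \<partial>measure_pmf (bernoulli_pmf p) \<partial>points)"
    by (rule integral_fst'[symmetric])
  then show ?thesis
    unfolding example_measure_eq using p_nonneg p_le_1 by (simp add: mult.commute)
qed

lemma integral_example_measure_fst:
  fixes h :: "'a::euclidean_space \<Rightarrow> real"
  assumes "h \<in> borel_measurable borel" "\<And>y. \<bar>h y\<bar> \<le> K"
  shows "(\<integral>\<omega>. h (fst \<omega>) \<partial>example_measure r R c p) = integral\<^sup>L points h"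
  using assms by (subst integral_example_measure[where K=K]) (auto simp: algebra_simps)

lemma measure_example_measure_fst:
  assumes "A \<in> sets borel"
  shows "measure (example_measure r R c p) {\<omega> \<in> space (example_measure r R c p). fst \<omega> \<in> A}
    = measure (points :: 'a::euclidean_space measure) A"
proof -
  have "{\<omega> \<in> space (example_measure r R c p). fst \<omega> \<in> A} = A \<times> UNIV"
    using sets_eq_imp_space_eq[OF sets_example_measure] by (auto simp: space_pair_measure)
  moreover have "emeasure (example_measure r R c p) (A \<times> UNIV) = emeasure points A"
    unfolding example_measure_eq using assms by (simp add: measure_pmf.emeasure_pair_measure_Times)
  ultimately show ?thesis
    by (simp add: measure_def)
qed

lemma sets_sample_measure:
  "sets (sample_measure m r R c p :: (nat \<Rightarrow> 'a::euclidean_space \<times> bool) measure)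
    = sets (PiM {..<m} (\<lambda>_. borel \<Otimes>\<^sub>M count_space UNIV))"
  unfolding sample_measure_def by (intro sets_PiM_cong) (auto simp: sets_example_measure)

lemma hhat_event_sets:
  "{S \<in> space (sample_measure m r R c p). hhat \<beta> m r S x = 1} \<in> sets (sample_measure m r R c p)"
proof -
  have "(\<lambda>S. hhat \<beta> m r S x) \<in> borel_measurable (sample_measure m r R c p)"
    using measurable_hhat by (simp add: measurable_cong_sets[OF sets_sample_measure refl])
  then show ?thesis
    by measurable
qed

end

lemma small_inner_mass:
  fixes d \<beta> r R c :: real
  assumes "0 < \<beta>" "\<beta> < d" "0 < r" "0 \<le> R" and c: "c \<le> (1 - \<beta> / d) / (2400 * (1 + R / r) powr \<beta>)"
  shows "c \<le> 1 / 2400" "3 * c * d / (d - \<beta>) * r powr (-\<beta>) \<le> (R + r) powr (-\<beta>) / 800"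
proof -
  define P where "P = (1 + R / r) powr \<beta>"
  have "1 \<le> P"
    unfolding P_def using assms by (intro ge_one_powr_ge_zero) auto
  have "0 < 1 - \<beta> / d" "1 - \<beta> / d \<le> 1"
    using assms by (auto simp: field_simps)
  then have "(1 - \<beta> / d) / (2400 * P) \<le> 1 / (2400 * 1)"
    using \<open>1 \<le> P\<close> by (intro frac_le) auto
  then show "c \<le> 1 / 2400"
    using c unfolding P_def by linarith
  have "(R + r) powr (-\<beta>) = r powr (-\<beta>) / P"
  proof -
    have "R + r = r * (1 + R / r)"
      using assms by (simp add: field_simps)
    then show ?thesis
      unfolding P_def using assms by (simp add: powr_mult powr_minus_divide)
  qed
  moreover have "c * (3 * d / (d - \<beta>) * r powr (-\<beta>)) \<le> (1 - \<beta> / d) / (2400 * P) * (3 * d / (d - \<beta>) * r powr (-\<beta>))"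
    using c assms unfolding P_def by (intro mult_right_mono) auto
  moreover have "(1 - \<beta> / d) / (2400 * P) * (3 * d / (d - \<beta>) * r powr (-\<beta>)) = r powr (-\<beta>) / P / 800"
    using assms \<open>1 \<le> P\<close> by (simp add: field_simps)
  ultimately show "3 * c * d / (d - \<beta>) * r powr (-\<beta>) \<le> (R + r) powr (-\<beta>) / 800"
    by simp
qed

lemma shrunk_radius_powr:
  fixes m r \<beta> \<alpha> \<sigma> :: real
  assumes "0 < m" "0 < r" "\<alpha> + \<sigma> = 2 * \<beta>"
  shows "(r * m powr (-1/\<beta>)) powr (-\<sigma>) * r powr (-\<alpha>) = r powr (-2 * \<beta>) * m powr (\<sigma> / \<beta>)"
proof -
  have "(r * m powr (-1/\<beta>)) powr (-\<sigma>) * r powr (-\<alpha>) = r powr (-(\<alpha> + \<sigma>)) * m powr (\<sigma> / \<beta>)"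
    using assms(1,2) by (simp add: powr_mult powr_powr mult_ac flip: powr_add)
  also have "-(\<alpha> + \<sigma>) = -2 * \<beta>"
    using assms by simp
  finally show ?thesis .
qed

lemma powr_log_cutoff_le:
  fixes m d \<beta> :: real
  assumes "1 < m" "0 < d" "0 < \<beta>"
  shows "m powr ((2 * \<beta> - min (2 * \<beta>) (d - d / (1 + ln m))) / \<beta>) \<le> exp (d / \<beta>) * (1 + m powr ((2 * \<beta> - d) / \<beta>))"
proof (cases "2 * \<beta> \<le> d - d / (1 + ln m)")
  case True
  have "1 * 1 \<le> exp (d / \<beta>) * (1 + m powr ((2 * \<beta> - d) / \<beta>))"
    using assms by (intro mult_mono) auto
  then show ?thesis
    using True by simp
next
  case False
  have "0 < ln m"
    using assms by simp
  have "(2 * \<beta> - min (2 * \<beta>) (d - d / (1 + ln m))) / \<beta> = (2 * \<beta> - d) / \<beta> + d / (1 + ln m) / \<beta>"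
    using False by (simp add: diff_divide_distrib add_divide_distrib)
  then have "m powr ((2 * \<beta> - min (2 * \<beta>) (d - d / (1 + ln m))) / \<beta>)
      = m powr ((2 * \<beta> - d) / \<beta>) * m powr (d / (1 + ln m) / \<beta>)"
    by (simp only: powr_add)
  also have "m powr (d / (1 + ln m) / \<beta>) \<le> exp (d / \<beta>)"
  proof -
    have "d / (1 + ln m) / \<beta> * ln m = d / \<beta> * (ln m / (1 + ln m))"
      by (simp add: field_simps)
    also have "\<dots> \<le> d / \<beta>"
    proof -
      have "ln m / (1 + ln m) \<le> 1"
        using \<open>0 < ln m\<close> by (subst divide_le_eq_1_pos) linarith+
      then show ?thesis
        using assms by (intro mult_left_le) auto
    qed
    finally show ?thesis
      using assms by (simp add: powr_def)
  qed
  then have "m powr ((2 * \<beta> - d) / \<beta>) * m powr (d / (1 + ln m) / \<beta>) \<le> m powr ((2 * \<beta> - d) / \<beta>) * exp (d / \<beta>)"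
    by (intro mult_left_mono) auto
  finally have "m powr ((2 * \<beta> - min (2 * \<beta>) (d - d / (1 + ln m))) / \<beta>) \<le> exp (d / \<beta>) * m powr ((2 * \<beta> - d) / \<beta>)"
    by (simp only: mult.commute)
  then show ?thesis
    using exp_gt_zero[of "d / \<beta>"] unfolding distrib_left mult_1_right by linarith
qed

lemma rate_terms_le:
  fixes c A0 A1 \<mu> L T1 T2 :: real
  assumes "0 \<le> c" "0 \<le> A0" "0 \<le> A1" "0 < \<mu>" "1 \<le> L" "0 \<le> T1" "0 \<le> T2"
  shows "c * T2 + (A0 * T1 + A1 * (1 + L) * (T1 + T2)) / \<mu>\<^sup>2 \<le> (c + (A0 + 2 * A1) / \<mu>\<^sup>2) * L * (T1 + T2)"
proof -
  have T: "T1 + T2 \<le> L * (T1 + T2)"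
    using assms mult_right_mono[of 1 L "T1 + T2"] by simp
  then have "c * T2 \<le> c * (L * (T1 + T2))" "A0 * T1 \<le> A0 * (L * (T1 + T2))"
    using assms by (auto intro!: mult_left_mono)
  moreover have "A1 * ((1 + L) * (T1 + T2)) \<le> A1 * (2 * (L * (T1 + T2)))"
    using T assms by (intro mult_left_mono) (auto simp: algebra_simps)
  ultimately have "c * T2 \<le> c * (L * (T1 + T2))"
    "A0 * T1 + A1 * (1 + L) * (T1 + T2) \<le> (A0 + 2 * A1) * (L * (T1 + T2))"
    by (auto simp: algebra_simps)
  then have "c * T2 + (A0 * T1 + A1 * (1 + L) * (T1 + T2)) / \<mu>\<^sup>2
      \<le> c * (L * (T1 + T2)) + (A0 + 2 * A1) * (L * (T1 + T2)) / \<mu>\<^sup>2"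
    using assms by (intro add_mono divide_right_mono) auto
  also have "\<dots> = (c + (A0 + 2 * A1) / \<mu>\<^sup>2) * L * (T1 + T2)"
    by (simp add: algebra_simps)
  finally show ?thesis .
qed

lemma mult_shrunk_ratio_power:
  fixes m r \<beta> :: real
  assumes "0 < m" "0 < r" "0 < \<beta>"
  shows "m * (r * m powr (-1/\<beta>) / r) ^ n = 1 / m powr ((real n - \<beta>) / \<beta>)"
proof -
  have "(r * m powr (-1/\<beta>) / r) ^ n = m powr (real n * (-1/\<beta>))"
    using assms by (simp add: powr_power)
  moreover have "real n * (-1/\<beta>) = - (real n / \<beta>)" "(real n - \<beta>) / \<beta> = real n / \<beta> - 1"
    using assms by (simp_all add: field_simps)
  ultimately show ?thesis
    using assms by (simp add: powr_diff powr_minus_divide)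
qed

lemma powr_div_self_eq:
  fixes m a :: real
  assumes "0 < m" "0 < \<beta>"
  shows "m powr ((2 * \<beta> - a) / \<beta>) / m = 1 / m powr ((a - \<beta>) / \<beta>)"
proof -
  have "(2 * \<beta> - a) / \<beta> = 1 - (a - \<beta>) / \<beta>"
    using assms by (simp add: field_simps)
  then show ?thesis
    using assms by (simp add: powr_diff)
qed

lemma one_le_ln_nat: "4 \<le> m \<Longrightarrow> 1 \<le> ln (real m)"
  using e_less_272 by (subst ln_ge_iff) auto

(* c from the union bound over bad points; the rest from Chebyshev's inequality with the
   lower bound (R + r) powr (-beta) / 100 on the mean of the minorant. *)
definition rate_constant :: "real \<Rightarrow> real \<Rightarrow> real \<Rightarrow> real \<Rightarrow> real \<Rightarrow> real" where
  "rate_constant d \<beta> r R c =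
     c + (((2 * r) powr (-\<beta>))\<^sup>2 + 6 * c * r powr (-2 * \<beta>) * exp (d / \<beta>)) / ((R + r) powr (-\<beta>) / 100)\<^sup>2"

locale noisy_model_point = noisy_model +
  fixes x :: "'a::euclidean_space" and \<beta> \<delta> :: real
  assumes x_le: "norm x \<le> r" and \<beta>_pos: "0 < \<beta>" and \<beta>_less: "\<beta> < real DIM('a)"
    and \<delta>_pos: "0 < \<delta>" and p_le_half: "p \<le> 1/2"
begin

abbreviation D :: "'a measure" where
  "D \<equiv> points"

abbreviation M :: "('a \<times> bool) measure" where
  "M \<equiv> example_measure r R c p"

definition inner_term :: "'a \<Rightarrow> real" where
  "inner_term y = (if norm y < r then min (norm (x - y) powr (-\<beta>)) (\<delta> powr (-\<beta>)) else 0)"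

definition annulus_term :: "'a \<Rightarrow> real" where
  "annulus_term y = indicator (annulus (3 * r) R) y * norm (x - y) powr (-\<beta>)"

(* Lower bound for the summand of a good sample point in the sum defining hhat x
   (minorant_le_summand); the truncation at delta keeps its second moment finite. *)
definition minorant :: "'a \<times> bool \<Rightarrow> real" where
  "minorant \<omega> = (if snd \<omega> then -1 else 1) * annulus_term (fst \<omega>) - inner_term (fst \<omega>)"

lemma inner_term_borel[measurable]: "inner_term \<in> borel_measurable borel"
  unfolding inner_term_def by measurable

lemma annulus_term_borel[measurable]: "annulus_term \<in> borel_measurable borel"
  unfolding annulus_term_def by measurable

lemma minorant_borel[measurable]: "minorant \<in> borel_measurable (borel \<Otimes>\<^sub>M count_space UNIV)"
  unfolding minorant_def by measurable

lemma inner_term_bounds: "0 \<le> inner_term y" "inner_term y \<le> \<delta> powr (-\<beta>)"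
  unfolding inner_term_def by auto

lemma annulus_term_bounds:
  "0 \<le> annulus_term y" "annulus_term y \<le> (2 * r) powr (-\<beta>)"
  "y \<in> annulus (3 * r) R \<Longrightarrow> (R + r) powr (-\<beta>) \<le> annulus_term y"
proof -
  have "2 * r \<le> norm (x - y) \<and> norm (x - y) \<le> R + r" if "y \<in> annulus (3 * r) R"
    using that x_le norm_triangle_ineq2[of y x] norm_triangle_ineq4[of x y]
    by (auto simp: mem_annulus_iff norm_minus_commute)
  then show "0 \<le> annulus_term y" "annulus_term y \<le> (2 * r) powr (-\<beta>)"
    "y \<in> annulus (3 * r) R \<Longrightarrow> (R + r) powr (-\<beta>) \<le> annulus_term y"
    unfolding annulus_term_def using r_pos \<beta>_pos by (auto simp: indicator_def intro!: powr_mono2')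
qed

lemma minorant_abs_le: "\<bar>minorant \<omega>\<bar> \<le> (2 * r) powr (-\<beta>) + \<delta> powr (-\<beta>)"
  unfolding minorant_def using annulus_term_bounds[of "fst \<omega>"] inner_term_bounds[of "fst \<omega>"] by auto

lemma minorant_square_le: "(minorant \<omega>)\<^sup>2 \<le> ((2 * r) powr (-\<beta>))\<^sup>2 + (inner_term (fst \<omega>))\<^sup>2"
proof (cases "fst \<omega> \<in> annulus (3 * r) R")
  case True
  then have "inner_term (fst \<omega>) = 0"
    using r_pos by (auto simp: inner_term_def mem_annulus_iff)
  then show ?thesis
    unfolding minorant_def using annulus_term_bounds[of "fst \<omega>"] by (simp add: power_mono)
next
  case False
  then show ?thesis
    unfolding minorant_def annulus_term_def by simp
qed

lemma nn_integral_points_inner_le: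
  fixes h :: "'a \<Rightarrow> real" and s K :: real
  assumes s: "0 < s" "s < real DIM('a)" and "0 \<le> K" and [measurable]: "h \<in> borel_measurable borel"
    and nonneg: "\<And>y. 0 \<le> h y" and near: "\<And>y. norm y < r \<Longrightarrow> h y \<le> K * norm (x - y) powr (-s)"
    and far: "\<And>y. \<not> norm y < r \<Longrightarrow> h y = 0"
  shows "(\<integral>\<^sup>+y. h y \<partial>D) \<le> 3 * c * K * real DIM('a) / (real DIM('a) - s) * r powr (-s)"
proof -
  define V where "V = Vd TYPE('a)"
  define d where "d = real DIM('a)"
  define C where "C = c / (V * r ^ DIM('a)) * K"
  have "0 < V"
    unfolding V_def by (rule Vd_pos)
  then have "0 \<le> C"
    unfolding C_def using c_nonneg r_pos \<open>0 \<le> K\<close> by simp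
  have pointwise: "mu_dens r R c y * h y \<le> C * (indicator (ball 0 r) y * norm (x - y) powr (-s))" for y
  proof (cases "norm y < r")
    case True
    then have "mu_dens r R c y * h y = c / (V * r ^ DIM('a)) * h y"
      unfolding mu_dens_def V_def by simp
    also have "\<dots> \<le> c / (V * r ^ DIM('a)) * (K * norm (x - y) powr (-s))"
      using near[OF True] c_nonneg \<open>0 < V\<close> r_pos by (intro mult_left_mono) auto
    finally show ?thesis
      using True unfolding C_def by (simp add: mult_ac)
  qed (use far \<open>0 \<le> C\<close> in simp)
  have "(\<integral>\<^sup>+y. h y \<partial>D) = (\<integral>\<^sup>+y. ennreal (mu_dens r R c y * h y) \<partial>lborel)"
    unfolding points_def by (simp add: nn_integral_density ennreal_mult mu_dens_nonneg nonneg)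
  also have "\<dots> \<le> (\<integral>\<^sup>+y. ennreal C * ennreal (indicator (ball 0 r) y * norm (x - y) powr (-s)) \<partial>lborel)"
    using pointwise \<open>0 \<le> C\<close> by (intro nn_integral_mono) (simp add: ennreal_mult'[symmetric] ennreal_leI)
  also have "\<dots> = ennreal C * (\<integral>\<^sup>+y. ennreal (indicator (ball 0 r) y * norm (x - y) powr (-s)) \<partial>lborel)"
    by (rule nn_integral_cmult) measurable
  also have "\<dots> \<le> ennreal C * ennreal (3 * d / (d - s) * V * r powr (d - s))"
    unfolding d_def V_def using nn_integral_ball_norm_powr_le[OF s r_pos] by (intro mult_left_mono) auto
  also have "\<dots> = ennreal (3 * c * K * d / (d - s) * r powr (-s))"
  proof -
    have "r powr (d - s) = r ^ DIM('a) * r powr (-s)"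
      unfolding d_def using r_pos by (simp add: powr_realpow[symmetric] powr_add[symmetric])
    then have eq: "C * (3 * d / (d - s) * V * r powr (d - s)) = 3 * c * K * d / (d - s) * r powr (-s)"
      unfolding C_def using \<open>0 < V\<close> r_pos by simp
    show ?thesis
      by (simp only: ennreal_mult'[OF \<open>0 \<le> C\<close>, symmetric] eq)
  qed
  finally show ?thesis
    unfolding d_def .
qed

lemma integral_points_inner_le:
  fixes h :: "'a \<Rightarrow> real" and s K :: real
  assumes s: "0 < s" "s < real DIM('a)" and "0 \<le> K" and [measurable]: "h \<in> borel_measurable borel"
    and nonneg: "\<And>y. 0 \<le> h y" and "\<And>y. norm y < r \<Longrightarrow> h y \<le> K * norm (x - y) powr (-s)"
    and "\<And>y. \<not> norm y < r \<Longrightarrow> h y = 0"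
  shows "integral\<^sup>L D h \<le> 3 * c * K * real DIM('a) / (real DIM('a) - s) * r powr (-s)"
proof -
  have "integral\<^sup>L D h = enn2real (\<integral>\<^sup>+y. h y \<partial>D)"
    using nonneg by (intro integral_eq_nn_integral) auto
  then show ?thesis
    using nn_integral_points_inner_le[OF assms] s c_nonneg \<open>0 \<le> K\<close> by (auto intro!: enn2real_leI)
qed

lemma integral_points_annulus_term_ge: "(1 - c) * (R + r) powr (-\<beta>) \<le> integral\<^sup>L D annulus_term"
proof -
  interpret D: prob_space D
    by (rule prob_space_points)
  have "measure D (annulus (3 * r) R) = 1 - c"
    using c_le_1 by (simp add: measure_def emeasure_points_ball_annulus)
  then have "(1 - c) * (R + r) powr (-\<beta>) = (\<integral>y. (R + r) powr (-\<beta>) * indicator (annulus (3 * r) R) y \<partial>D)"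
    by simp
  also have "\<dots> \<le> integral\<^sup>L D annulus_term"
  proof (rule integral_mono)
    show "integrable D annulus_term"
      using annulus_term_bounds by (intro D.integrable_const_bound[where B="(2 * r) powr (-\<beta>)"]) auto
    show "integrable D (\<lambda>y. (R + r) powr (-\<beta>) * indicator (annulus (3 * r) R) y)"
      by (intro D.integrable_const_bound[where B="(R + r) powr (-\<beta>)"]) (auto simp: indicator_def)
  qed (use annulus_term_bounds in \<open>auto simp: indicator_def\<close>)
  finally show ?thesis .
qed

lemma expectation_minorant_ge:
  "(1 - 2 * p) * ((1 - c) * (R + r) powr (-\<beta>)) - 3 * c * real DIM('a) / (real DIM('a) - \<beta>) * r powr (-\<beta>)
    \<le> integral\<^sup>L M minorant"
proof -
  interpret D: prob_space D
    by (rule prob_space_points)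
  have int: "integrable D annulus_term" "integrable D inner_term"
    using annulus_term_bounds inner_term_bounds
    by (intro D.integrable_const_bound[where B="(2 * r) powr (-\<beta>)"] D.integrable_const_bound[where B="\<delta> powr (-\<beta>)"];
        simp)+
  have "integral\<^sup>L M minorant = (\<integral>y. (1 - 2 * p) * annulus_term y - inner_term y \<partial>D)"
    by (subst integral_example_measure[OF minorant_borel minorant_abs_le])
      (simp add: minorant_def algebra_simps)
  also have "\<dots> = (1 - 2 * p) * integral\<^sup>L D annulus_term - integral\<^sup>L D inner_term"
    using int by simp
  finally have "integral\<^sup>L M minorant = (1 - 2 * p) * integral\<^sup>L D annulus_term - integral\<^sup>L D inner_term" .
  moreover have "(1 - 2 * p) * ((1 - c) * (R + r) powr (-\<beta>)) \<le> (1 - 2 * p) * integral\<^sup>L D annulus_term"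
    using integral_points_annulus_term_ge p_le_half by (intro mult_left_mono) auto
  moreover have "integral\<^sup>L D inner_term \<le> 3 * c * 1 * real DIM('a) / (real DIM('a) - \<beta>) * r powr (-\<beta>)"
    using \<beta>_pos \<beta>_less inner_term_bounds
    by (intro integral_points_inner_le) (auto simp: inner_term_def)
  ultimately show ?thesis
    by simp
qed

lemma second_moment_minorant_le:
  assumes \<alpha>: "0 < \<alpha>" "\<alpha> < real DIM('a)" and "0 \<le> \<sigma>" "\<alpha> + \<sigma> = 2 * \<beta>"
  shows "(\<integral>\<omega>. (minorant \<omega>)\<^sup>2 \<partial>M)
    \<le> ((2 * r) powr (-\<beta>))\<^sup>2 + 3 * c * \<delta> powr (-\<sigma>) * real DIM('a) / (real DIM('a) - \<alpha>) * r powr (-\<alpha>)"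
proof -
  interpret M: prob_space M
    by (rule prob_space_example_measure)
  have inner_square_bounded: "\<bar>(inner_term y)\<^sup>2\<bar> \<le> (\<delta> powr (-\<beta>))\<^sup>2" for y
    using inner_term_bounds[of y] by (simp add: power_mono)
  then have int: "integrable M (\<lambda>\<omega>. (inner_term (fst \<omega>))\<^sup>2)"
    by (intro M.integrable_const_bound[where B="(\<delta> powr (-\<beta>))\<^sup>2"]) auto
  have inner_square: "(\<integral>\<omega>. (inner_term (fst \<omega>))\<^sup>2 \<partial>M) = integral\<^sup>L D (\<lambda>y. (inner_term y)\<^sup>2)"
    by (rule integral_example_measure_fst) (measurable, rule inner_square_bounded)
  have "\<bar>(minorant \<omega>)\<^sup>2\<bar> \<le> ((2 * r) powr (-\<beta>) + \<delta> powr (-\<beta>))\<^sup>2" for \<omega>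
    using power_mono[OF minorant_abs_le abs_ge_zero, of \<omega> 2] by simp
  then have "integrable M (\<lambda>\<omega>. (minorant \<omega>)\<^sup>2)"
    by (intro M.integrable_const_bound[where B="((2 * r) powr (-\<beta>) + \<delta> powr (-\<beta>))\<^sup>2"]) auto
  then have "(\<integral>\<omega>. (minorant \<omega>)\<^sup>2 \<partial>M) \<le> (\<integral>\<omega>. ((2 * r) powr (-\<beta>))\<^sup>2 + (inner_term (fst \<omega>))\<^sup>2 \<partial>M)"
    using int minorant_square_le by (intro integral_mono) auto
  also have "\<dots> = ((2 * r) powr (-\<beta>))\<^sup>2 + integral\<^sup>L D (\<lambda>y. (inner_term y)\<^sup>2)"
    using int by (simp add: M.prob_space inner_square)
  also have "integral\<^sup>L D (\<lambda>y. (inner_term y)\<^sup>2) \<le> 3 * c * \<delta> powr (-\<sigma>) * real DIM('a) / (real DIM('a) - \<alpha>) * r powr (-\<alpha>)"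
    using min_powr_square_le[OF norm_ge_zero \<delta>_pos \<alpha>(1) assms(3,4)]
    by (intro integral_points_inner_le[OF \<alpha>, where K="\<delta> powr (-\<sigma>)"]) (auto simp: inner_term_def)
  finally show ?thesis
    by simp
qed

definition bad_points :: "'a set" where
  "bad_points = - (ball 0 r \<union> annulus (3 * r) R) \<union> (ball 0 r \<inter> ball x \<delta>)"

lemma bad_points_sets_borel[measurable]: "bad_points \<in> sets borel"
  unfolding bad_points_def by measurable

lemma measure_bad_points_le: "measure D bad_points \<le> c * (\<delta> / r) ^ DIM('a)"
proof -
  define V where "V = Vd TYPE('a)"
  have "0 < V"
    unfolding V_def by (rule Vd_pos)
  have "ennreal (mu_dens r R c y) * indicator bad_points y \<le> ennreal (c / (V * r ^ DIM('a))) * indicator (ball x \<delta>) y"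
    for y
    unfolding bad_points_def mu_dens_def V_def by (auto simp: indicator_def mem_annulus_iff)
  then have "emeasure D bad_points \<le> (\<integral>\<^sup>+y. ennreal (c / (V * r ^ DIM('a))) * indicator (ball x \<delta>) y \<partial>lborel)"
    by (simp add: emeasure_points nn_integral_mono)
  also have "\<dots> = ennreal (c / (V * r ^ DIM('a))) * ennreal (V * \<delta> ^ DIM('a))"
    using \<delta>_pos by (simp add: nn_integral_cmult_indicator emeasure_ball_Vd V_def)
  also have "\<dots> = ennreal (c * (\<delta> / r) ^ DIM('a))"
    using \<open>0 < V\<close> r_pos c_nonneg by (simp add: ennreal_mult'[symmetric] power_divide)
  finally show ?thesis
    unfolding measure_def using c_nonneg \<delta>_pos r_pos by (intro enn2real_leI) auto
qed

lemma minorant_le_summand: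
  assumes "fst \<omega> \<notin> bad_points"
  shows "minorant \<omega> \<le> (if snd \<omega> then - fstar r (fst \<omega>) else fstar r (fst \<omega>)) * norm (x - fst \<omega>) powr (-\<beta>)"
proof (cases "fst \<omega> \<in> ball 0 r")
  case True
  then have "\<delta> \<le> norm (x - fst \<omega>)"
    using assms unfolding bad_points_def by (auto simp: dist_norm)
  then have "inner_term (fst \<omega>) = norm (x - fst \<omega>) powr (-\<beta>)"
    using True \<delta>_pos \<beta>_pos by (auto simp: inner_term_def intro!: min_absorb1 powr_mono2')
  moreover have "annulus_term (fst \<omega>) = 0"
    using True r_pos by (auto simp: annulus_term_def mem_annulus_iff)
  ultimately show ?thesis
    using True by (simp add: minorant_def fstar_def)
next
  case False
  then have "fst \<omega> \<in> annulus (3 * r) R"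
    using assms unfolding bad_points_def by auto
  then show ?thesis
    using False r_pos
    by (auto simp: minorant_def annulus_term_def inner_term_def fstar_def mem_annulus_iff)
qed

lemma hhat_eq_one_if_good:
  assumes good: "\<forall>i<m. fst (S i) \<notin> bad_points" and pos: "0 < (\<Sum>i<m. minorant (S i))"
  shows "hhat \<beta> m r S x = 1"
proof -
  have "x \<in> bad_points"
    using x_le \<delta>_pos r_pos unfolding bad_points_def by (auto simp: mem_annulus_iff)
  then have "\<not> (\<exists>i<m. fst (S i) = x)"
    using good by auto
  moreover have "(\<Sum>i<m. minorant (S i)) \<le> (\<Sum>i<m. label r S i * norm (x - fst (S i)) powr (-\<beta>))"
    unfolding label_def using good minorant_le_summand by (intro sum_mono) auto
  ultimately show ?thesis
    using pos unfolding hhat_def by auto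
qed

lemma prob_hhat_eq_one_ge:
  assumes "0 < m" and mean_pos: "0 < integral\<^sup>L M minorant"
  shows "1 - m * (c * (\<delta> / r) ^ DIM('a))
      - (\<integral>\<omega>. (minorant \<omega>)\<^sup>2 \<partial>M) / (m * (integral\<^sup>L M minorant)\<^sup>2)
    \<le> measure (sample_measure m r R c p) {S \<in> space (sample_measure m r R c p). hhat \<beta> m r S x = 1}"
proof -
  let ?Q = "sample_measure m r R c p :: (nat \<Rightarrow> 'a \<times> bool) measure"
  interpret M: prob_space M
    by (rule prob_space_example_measure)
  interpret Q: prob_space ?Q
    unfolding sample_measure_def by (rule prob_space_PiM) (rule M.prob_space_axioms)
  define bad where "bad = {\<omega> \<in> space M. fst \<omega> \<in> bad_points}"
  define some_bad where "some_bad = {S \<in> space ?Q. \<exists>i\<in>{..<m}. S i \<in> bad}"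
  define nonpos where "nonpos = {S \<in> space ?Q. (\<Sum>i\<in>{..<m}. minorant (S i)) \<le> 0}"
  have [measurable]: "bad \<in> sets M"
    unfolding bad_def by measurable
  have subset: "space ?Q - (some_bad \<union> nonpos) \<subseteq> {S \<in> space ?Q. hhat \<beta> m r S x = 1}"
  proof
    fix S assume S: "S \<in> space ?Q - (some_bad \<union> nonpos)"
    then have "\<forall>i<m. fst (S i) \<notin> bad_points" "0 < (\<Sum>i<m. minorant (S i))"
      unfolding some_bad_def nonpos_def bad_def sample_measure_def by (auto simp: space_PiM)
    then show "S \<in> {S \<in> space ?Q. hhat \<beta> m r S x = 1}"
      using S by (simp add: hhat_eq_one_if_good)
  qed
  have "some_bad \<in> sets ?Q" "nonpos \<in> sets ?Q"
    unfolding some_bad_def nonpos_def sample_measure_def by measurable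
  then have "1 - Q.prob some_bad - Q.prob nonpos \<le> Q.prob {S \<in> space ?Q. hhat \<beta> m r S x = 1}"
    using hhat_event_sets subset by (rule Q.prob_ge_of_complement_subset)
  moreover have "Q.prob some_bad \<le> m * (c * (\<delta> / r) ^ DIM('a))"
    using measure_PiM_exists_component_le[OF M.prob_space_axioms _ \<open>bad \<in> sets M\<close>, of "{..<m}"]
      measure_example_measure_fst[OF bad_points_sets_borel] measure_bad_points_le
    unfolding some_bad_def sample_measure_def bad_def by (simp add: mult_left_mono order_trans)
  moreover have "Q.prob nonpos \<le> (\<integral>\<omega>. (minorant \<omega>)\<^sup>2 \<partial>M) / (m * (integral\<^sup>L M minorant)\<^sup>2)"
    using measure_PiM_sum_nonpos_le[OF M.prob_space_axioms _ _ _ minorant_abs_le mean_pos, of "{..<m}"] \<open>0 < m\<close>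
    unfolding nonpos_def sample_measure_def by (simp add: lessThan_empty_iff)
  ultimately show ?thesis
    by linarith
qed

lemma expectation_minorant_ge_uniform:
  assumes "p < 0.49" and c: "c \<le> (1 - \<beta> / real DIM('a)) / (2400 * (1 + R / r) powr \<beta>)"
  shows "(R + r) powr (-\<beta>) / 100 \<le> integral\<^sup>L M minorant"
proof -
  define W where "W = (R + r) powr (-\<beta>)"
  have "0 < W"
    unfolding W_def using r_pos R_gt by simp
  have "c \<le> 1 / 2400" and inner: "3 * c * real DIM('a) / (real DIM('a) - \<beta>) * r powr (-\<beta>) \<le> W / 800"
    using small_inner_mass[OF \<beta>_pos \<beta>_less r_pos _ c] r_pos R_gt unfolding W_def by auto
  then have "(1/50) * ((2399/2400) * W) \<le> (1 - 2 * p) * ((1 - c) * W)"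
    using \<open>p < 0.49\<close> \<open>0 < W\<close> by (intro mult_mono) auto
  then show ?thesis
    using expectation_minorant_ge inner \<open>0 < W\<close> unfolding W_def by linarith
qed

lemma second_moment_minorant_log_le:
  assumes "1 < m" and \<delta>_eq: "\<delta> = r * m powr (-1/\<beta>)"
  shows "(\<integral>\<omega>. (minorant \<omega>)\<^sup>2 \<partial>M) \<le> ((2 * r) powr (-\<beta>))\<^sup>2
    + 3 * c * r powr (-2 * \<beta>) * exp (real DIM('a) / \<beta>) * (1 + ln m) * (1 + m powr ((2 * \<beta> - real DIM('a)) / \<beta>))"
proof -
  define d where "d = real DIM('a)"
  \<comment> \<open>With alpha = d - d / (1 + ln m), capped at 2 beta, the factor d / (d - alpha) is at most
    1 + ln m while the excess of m powr (sigma / beta) over m powr ((2 beta - d) / beta) is at most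
    exp (d / beta): this is where the logarithm in the rate comes from.\<close>
  define \<epsilon> where "\<epsilon> = d / (1 + ln m)"
  define \<alpha> where "\<alpha> = min (2 * \<beta>) (d - \<epsilon>)"
  have "0 < ln m"
    using \<open>1 < m\<close> by simp
  then have "0 < \<epsilon>" "\<epsilon> < d" "d / \<epsilon> = 1 + ln m"
    unfolding \<epsilon>_def d_def by (auto simp: field_simps)
  then have \<alpha>: "0 < \<alpha>" "\<alpha> < real DIM('a)" "\<epsilon> \<le> d - \<alpha>"
    unfolding \<alpha>_def d_def using \<beta>_pos by auto
  then have "d / (d - \<alpha>) \<le> d / \<epsilon>"
    using \<open>0 < \<epsilon>\<close> unfolding d_def by (intro divide_left_mono) auto
  then have "d / (d - \<alpha>) \<le> 1 + ln m"
    using \<open>d / \<epsilon> = 1 + ln m\<close> by simp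
  have "(\<integral>\<omega>. (minorant \<omega>)\<^sup>2 \<partial>M)
      \<le> ((2 * r) powr (-\<beta>))\<^sup>2 + 3 * c * \<delta> powr (-(2 * \<beta> - \<alpha>)) * d / (d - \<alpha>) * r powr (-\<alpha>)"
    using second_moment_minorant_le[OF \<alpha>(1,2), of "2 * \<beta> - \<alpha>"] unfolding d_def \<alpha>_def by simp
  also have "\<dots> = ((2 * r) powr (-\<beta>))\<^sup>2 + 3 * c * (\<delta> powr (-(2 * \<beta> - \<alpha>)) * r powr (-\<alpha>)) * (d / (d - \<alpha>))"
    by simp
  also have "\<delta> powr (-(2 * \<beta> - \<alpha>)) * r powr (-\<alpha>) = r powr (-2 * \<beta>) * m powr ((2 * \<beta> - \<alpha>) / \<beta>)"
    unfolding \<delta>_eq using \<open>1 < m\<close> r_pos by (intro shrunk_radius_powr) auto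
  also have "3 * c * (r powr (-2 * \<beta>) * m powr ((2 * \<beta> - \<alpha>) / \<beta>)) * (d / (d - \<alpha>))
      \<le> 3 * c * (r powr (-2 * \<beta>) * (exp (d / \<beta>) * (1 + m powr ((2 * \<beta> - d) / \<beta>)))) * (1 + ln m)"
    using powr_log_cutoff_le[OF \<open>1 < m\<close> _ \<beta>_pos, of d] \<open>d / (d - \<alpha>) \<le> 1 + ln m\<close> \<alpha> c_nonneg
    unfolding \<alpha>_def \<epsilon>_def d_def by (intro mult_mono mult_left_mono) auto
  finally show ?thesis
    unfolding d_def by (simp add: mult_ac)
qed

lemma second_moment_minorant_rate_le:
  fixes m :: nat
  assumes "1 < m" and \<delta>_eq: "\<delta> = r * real m powr (-1/\<beta>)"
  shows "(\<integral>\<omega>. (minorant \<omega>)\<^sup>2 \<partial>M) / m \<le> ((2 * r) powr (-\<beta>))\<^sup>2 * (1 / m)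
    + 3 * c * r powr (-2 * \<beta>) * exp (real DIM('a) / \<beta>) * (1 + ln m)
      * (1 / m + 1 / real m powr ((real DIM('a) - \<beta>) / \<beta>))"
proof -
  define B where "B = 3 * c * r powr (-2 * \<beta>) * exp (real DIM('a) / \<beta>) * (1 + ln m)"
  define y where "y = real m powr ((2 * \<beta> - real DIM('a)) / \<beta>)"
  have "(\<integral>\<omega>. (minorant \<omega>)\<^sup>2 \<partial>M) / m \<le> (((2 * r) powr (-\<beta>))\<^sup>2 + B * (1 + y)) / m"
    using second_moment_minorant_log_le[OF _ \<delta>_eq] assms unfolding B_def y_def
    by (intro divide_right_mono) (auto simp: mult.assoc)
  also have "\<dots> = ((2 * r) powr (-\<beta>))\<^sup>2 * (1 / m) + B * (1 / m + y / m)"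
    by (simp add: add_divide_distrib distrib_left)
  also have "y / m = 1 / real m powr ((real DIM('a) - \<beta>) / \<beta>)"
    unfolding y_def using assms \<beta>_pos by (intro powr_div_self_eq) auto
  finally show ?thesis
    unfolding B_def .
qed

lemma prob_hhat_eq_one_rate:
  fixes m :: nat
  assumes "4 \<le> m" and \<delta>_eq: "\<delta> = r * real m powr (-1/\<beta>)" and "p < 0.49"
    and c: "c \<le> (1 - \<beta> / real DIM('a)) / (2400 * (1 + R / r) powr \<beta>)"
  shows "1 - rate_constant (real DIM('a)) \<beta> r R c * ln (real m)
      * (1 / real m + 1 / real m powr ((real DIM('a) - \<beta>) / \<beta>))
    \<le> measure (sample_measure m r R c p) {S \<in> space (sample_measure m r R c p). hhat \<beta> m r S x = 1}"
proof -
  define \<mu>0 where "\<mu>0 = (R + r) powr (-\<beta>) / 100"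
  define A0 where "A0 = ((2 * r) powr (-\<beta>))\<^sup>2"
  define A1 where "A1 = 3 * c * r powr (-2 * \<beta>) * exp (real DIM('a) / \<beta>)"
  define T1 where "T1 = 1 / real m"
  define T2 where "T2 = 1 / real m powr ((real DIM('a) - \<beta>) / \<beta>)"
  define L where "L = ln (real m)"
  have "0 < \<mu>0" "0 \<le> A1" "1 \<le> L" "1 < m"
    unfolding \<mu>0_def A1_def L_def using r_pos R_gt c_nonneg one_le_ln_nat[OF \<open>4 \<le> m\<close>] \<open>4 \<le> m\<close> by auto
  have mean: "\<mu>0 \<le> integral\<^sup>L M minorant"
    unfolding \<mu>0_def using \<open>p < 0.49\<close> c by (rule expectation_minorant_ge_uniform)
  have "0 \<le> (\<integral>\<omega>. (minorant \<omega>)\<^sup>2 \<partial>M)"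
    by (simp add: integral_nonneg)
  then have "(\<integral>\<omega>. (minorant \<omega>)\<^sup>2 \<partial>M) / (m * (integral\<^sup>L M minorant)\<^sup>2)
      \<le> (\<integral>\<omega>. (minorant \<omega>)\<^sup>2 \<partial>M) / m / \<mu>0\<^sup>2"
    using mean \<open>0 < \<mu>0\<close> unfolding divide_divide_eq_left[symmetric]
    by (intro divide_left_mono power_mono) auto
  also have "\<dots> \<le> (A0 * T1 + A1 * (1 + L) * (T1 + T2)) / \<mu>0\<^sup>2"
    using second_moment_minorant_rate_le[OF \<open>1 < m\<close> \<delta>_eq]
    unfolding A0_def A1_def T1_def T2_def L_def by (intro divide_right_mono) auto
  finally have variance_term: "(\<integral>\<omega>. (minorant \<omega>)\<^sup>2 \<partial>M) / (m * (integral\<^sup>L M minorant)\<^sup>2)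
      \<le> (A0 * T1 + A1 * (1 + L) * (T1 + T2)) / \<mu>0\<^sup>2" .
  have "real m * (\<delta> / r) ^ DIM('a) = T2"
    unfolding \<delta>_eq T2_def using \<open>1 < m\<close> r_pos \<beta>_pos by (intro mult_shrunk_ratio_power) auto
  then have bad_term: "real m * (c * (\<delta> / r) ^ DIM('a)) = c * T2"
    by (simp add: mult.left_commute)
  have "c * T2 + (A0 * T1 + A1 * (1 + L) * (T1 + T2)) / \<mu>0\<^sup>2 \<le> (c + (A0 + 2 * A1) / \<mu>0\<^sup>2) * L * (T1 + T2)"
    using c_nonneg \<open>0 \<le> A1\<close> \<open>0 < \<mu>0\<close> \<open>1 \<le> L\<close> by (intro rate_terms_le) (auto simp: A0_def T1_def T2_def)
  moreover have "c + (A0 + 2 * A1) / \<mu>0\<^sup>2 = rate_constant (real DIM('a)) \<beta> r R c"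
    unfolding rate_constant_def A0_def A1_def \<mu>0_def by simp
  ultimately show ?thesis
    using prob_hhat_eq_one_ge[of m] mean \<open>0 < \<mu>0\<close> \<open>1 < m\<close> variance_term bad_term
    unfolding T1_def T2_def L_def by simp
qed

end

theorem lemma7:
  fixes \<beta> R r c :: real
  assumes "0 < \<beta>" "\<beta> < real DIM('a::euclidean_space)"
    and "0 < r" "0 < c" "R > 3 * r"
    and "c \<le> (1 - \<beta> / real DIM('a)) / (2400 * (1 + R / r) powr \<beta>)"
  shows "\<exists>(m0::nat) (C::real) (k::nat). \<forall>(x::'a) m p.
           x \<in> cball 0 r \<longrightarrow> m > m0 \<longrightarrow> 0 < p \<longrightarrow> p < 0.49 \<longrightarrow>
           measure (sample_measure m r R c p)
             {S \<in> space (sample_measure m r R c p). hhat \<beta> m r S x = 1}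
           \<ge> 1 - C * ln (real m) ^ k *
                 (1 / real m + 1 / real m powr ((1 - \<beta> / real DIM('a)) / (\<beta> / real DIM('a))))"
proof (rule exI[of _ 3], rule exI[of _ "rate_constant (real DIM('a)) \<beta> r R c"], rule exI[of _ 1], intro allI impI)
  fix x :: 'a and m :: nat and p :: real
  assume "x \<in> cball 0 r" "3 < m" "0 < p" "p < 0.49"
  have "c \<le> 1 / 2400"
    using small_inner_mass(1)[OF assms(1,2,3) _ assms(6)] assms by simp
  then interpret noisy_model_point r R c p x \<beta> "r * real m powr (-1/\<beta>)"
    using assms \<open>x \<in> cball 0 r\<close> \<open>3 < m\<close> \<open>0 < p\<close> \<open>p < 0.49\<close> by unfold_locales auto
  have exponent: "(1 - \<beta> / real DIM('a)) / (\<beta> / real DIM('a)) = (real DIM('a) - \<beta>) / \<beta>"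
    using assms by (simp add: field_simps)
  show "1 - rate_constant (real DIM('a)) \<beta> r R c * ln (real m) ^ 1 *
      (1 / real m + 1 / real m powr ((1 - \<beta> / real DIM('a)) / (\<beta> / real DIM('a))))
    \<le> measure (sample_measure m r R c p) {S \<in> space (sample_measure m r R c p). hhat \<beta> m r S x = 1}"
    using prob_hhat_eq_one_rate[of m] \<open>3 < m\<close> \<open>p < 0.49\<close> assms(6) by (simp only: exponent power_one_right)
qed

end
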